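(* For every graph $G$ on $n$ vertices and every finite field $\mathbb{F}$ of size $q$, \[\mathrm{minrk}_{\mathbb{F}}(G)\le \overline{\xi}_l(\overline{G},\mathbb{F})+\lceil\log_q n\rceil.\] In particular, $\mathrm{minrk}_{\mathbb{F}_2}(G)\le \overline{\xi}_l(\overline{G},\mathbb{F}_2)+\lceil\log_2 n\rceil$.
   Context: $\overline{G}$ is the complement of $G$. For a graph $H$ on $[n]$, a matrix $M\in\mathbb{F}^{n\times n}$ represents $H$ if $M_{i,i}\ne0$ for all $i$ and $M_{i,j}=0$ for distinct non-adjacent $i,j$; $\mathrm{minrk}_{\mathbb{F}}(H)$ is the minimum rank over $\mathbb{F}$ of such a matrix. An orthogonal representation of $H=(V,E)$ over $\mathbb{F}$ assigns $u_v\in\mathbb{F}^t$ to each $v$ with $\langle u_v,u_v\rangle\ne0$ and $\langle u_v,u_{v'}\rangle=0$ for adjacent $v,v'$, where $\langle x,y\rangle=\sum_i x_iy_i$. Its locality is $\max_v\dim\mathrm{span}\{u_{v'}:v'\in\{v\}\cup N(v)\}$ with $N(v)$ the neighborhood of $v$; $\overline{\xi}_l(H,\mathbb{F})$ is the minimum locality of an orthogonal representation of $H$ over $\mathbb{F}$. *)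

theory Defs
  imports "Jordan_Normal_Form.DL_Rank" "HOL.Transcendental"
begin

text \<open>Graphs on the vertex set [n] = {0..<n} are given by an edge relation E.\<close>

definition simple_graph :: "nat \<Rightarrow> (nat \<Rightarrow> nat \<Rightarrow> bool) \<Rightarrow> bool" where
  "simple_graph n E \<longleftrightarrow> (\<forall>i<n. \<forall>j<n. E i j \<longleftrightarrow> E j i) \<and> (\<forall>i<n. \<not> E i i)"

definition complement :: "(nat \<Rightarrow> nat \<Rightarrow> bool) \<Rightarrow> nat \<Rightarrow> nat \<Rightarrow> bool" where
  "complement E i j \<longleftrightarrow> i \<noteq> j \<and> \<not> E i j"

definition represents :: "nat \<Rightarrow> (nat \<Rightarrow> nat \<Rightarrow> bool) \<Rightarrow> 'a::field mat \<Rightarrow> bool" where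
  "represents n E M \<longleftrightarrow> M \<in> carrier_mat n n \<and> (\<forall>i<n. M $$ (i,i) \<noteq> 0)
     \<and> (\<forall>i<n. \<forall>j<n. i \<noteq> j \<and> \<not> E i j \<longrightarrow> M $$ (i,j) = 0)"

definition minrk :: "'a::field itself \<Rightarrow> nat \<Rightarrow> (nat \<Rightarrow> nat \<Rightarrow> bool) \<Rightarrow> nat" where
  "minrk F n E = (LEAST r. \<exists>M :: 'a mat. represents n E M \<and> vec_space.rank n M = r)"

definition orth_rep :: "nat \<Rightarrow> (nat \<Rightarrow> nat \<Rightarrow> bool) \<Rightarrow> nat \<Rightarrow> (nat \<Rightarrow> 'a::field vec) \<Rightarrow> bool" where
  "orth_rep n E t u \<longleftrightarrow> (\<forall>v<n. u v \<in> carrier_vec t \<and> u v \<bullet> u v \<noteq> 0)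
     \<and> (\<forall>v<n. \<forall>v'<n. E v v' \<longrightarrow> u v \<bullet> u v' = 0)"

definition span_dim :: "nat \<Rightarrow> 'a::field vec set \<Rightarrow> nat" where
  "span_dim t W = vectorspace.dim (class_ring :: 'a ring) ((module_vec TYPE('a) t)\<lparr>carrier := LinearCombinations.module.span class_ring (module_vec TYPE('a) t) W\<rparr>)"

definition locality :: "nat \<Rightarrow> (nat \<Rightarrow> nat \<Rightarrow> bool) \<Rightarrow> nat \<Rightarrow> (nat \<Rightarrow> 'a::field vec) \<Rightarrow> nat" where
  "locality n E t u = Max {span_dim t (u ` {v'. v' < n \<and> (v' = v \<or> E v v')}) | v. v < n}"

definition xi_bar_l :: "'a::field itself \<Rightarrow> nat \<Rightarrow> (nat \<Rightarrow> nat \<Rightarrow> bool) \<Rightarrow> nat" where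
  "xi_bar_l F n E = (LEAST k. \<exists>t (u :: nat \<Rightarrow> 'a vec). orth_rep n E t u \<and> locality n E t u = k)"

end

theory Submission
  imports Defs
begin

text \<open>Let \<open>u\<close> be an orthogonal representation of the complement of \<open>G\<close> in \<open>\<bbbF>\<^sup>t\<close> of locality \<open>k\<close>,
  and let \<open>S\<^sub>v\<close> be the span of the vectors \<open>u\<^sub>w\<close> with \<open>w = v\<close> or \<open>w\<close> a non-neighbour of \<open>v\<close> in \<open>G\<close>;
  it has at most \<open>q\<^sup>k\<close> elements. With \<open>q\<^sup>c \<ge> n\<close>, a union bound over the at most \<open>n (q\<^sup>k - 1)\<close>
  nonzero vectors of the \<open>S\<^sub>v\<close> yields a linear map \<open>A : \<bbbF>\<^sup>t \<rightarrow> \<bbbF>\<^sup>k\<^sup>+\<^sup>c\<close> vanishing on none of them.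
  Then \<open>A u\<^sub>j\<close> is not in the span of the \<open>A u\<^sub>i\<close> over the non-neighbours \<open>i\<close> of \<open>j\<close>: a preimage
  \<open>w\<close> in the span of these \<open>u\<^sub>i\<close> is orthogonal to \<open>u\<^sub>j\<close>, so \<open>u\<^sub>j - w\<close> would be a nonzero vector
  of \<open>S\<^sub>j\<close> killed by \<open>A\<close>. Taking \<open>y\<^sub>j\<close> orthogonal to these \<open>A u\<^sub>i\<close> with \<open>y\<^sub>j \<bullet> A u\<^sub>j = 1\<close>, the matrix
  \<open>(y\<^sub>i \<bullet> A u\<^sub>j)\<close> represents \<open>G\<close> and has rank at most \<open>k + c\<close>.\<close>

lemma card_UNIV_field_ge_2: "2 \<le> card (UNIV :: 'a::{field,finite} set)"
proof -
  have "card {0::'a, 1} = 2" by simp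
  moreover have "card {0::'a, 1} \<le> card (UNIV :: 'a set)" by (rule card_mono) auto
  ultimately show ?thesis by simp
qed

lemma ceiling_log_nonneg:
  assumes "2 \<le> b"
  shows "0 \<le> \<lceil>log (real b) (real n)\<rceil>"
proof (cases "n = 0")
  case False
  then have "0 \<le> log (real b) (real n)" using assms by simp
  then show ?thesis by simp
qed (simp add: log_def)

lemma le_pow_nat_ceiling_log:
  assumes "2 \<le> b"
  shows "n \<le> b ^ nat \<lceil>log (real b) (real n)\<rceil>"
proof (cases "n = 0")
  case False
  have "real n = real b powr log (real b) (real n)" using assms False by simp
  also have "\<dots> \<le> real b powr real (nat \<lceil>log (real b) (real n)\<rceil>)"
    using assms by (intro powr_mono) (simp_all, linarith)
  also have "\<dots> = real (b ^ nat \<lceil>log (real b) (real n)\<rceil>)" using assms by (simp add: powr_realpow)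
  finally show ?thesis by linarith
qed simp

subsection \<open>Counting vectors\<close>

lemma (in vectorspace) card_carrier_le:
  assumes "fin_dim" "finite (carrier K)"
  shows "card (carrier V) \<le> card (carrier K) ^ dim"
proof -
  obtain \<beta> where b: "finite \<beta>" "basis \<beta>" using finite_basis_exists assms by blast
  hence d: "dim = card \<beta>" using dim_basis by auto
  have bc: "\<beta> \<subseteq> carrier V" "span \<beta> = carrier V" using b basis_def by auto
  have "carrier V \<subseteq> (\<lambda>a. lincomb a \<beta>) ` (\<beta> \<rightarrow>\<^sub>E carrier K)"
  proof
    fix v assume "v \<in> carrier V"
    then obtain a where a: "a \<in> \<beta> \<rightarrow> carrier K" "lincomb a \<beta> = v"
      using finite_in_span[of \<beta> v] bc b by auto
    have "lincomb (restrict a \<beta>) \<beta> = v"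
      using a bc by (metis lincomb_cong restrict_apply')
    moreover have "restrict a \<beta> \<in> \<beta> \<rightarrow>\<^sub>E carrier K" using a by auto
    ultimately show "v \<in> (\<lambda>a. lincomb a \<beta>) ` (\<beta> \<rightarrow>\<^sub>E carrier K)" by blast
  qed
  hence "card (carrier V) \<le> card (\<beta> \<rightarrow>\<^sub>E carrier K)"
    by (meson assms(2) b(1) card_image_le card_mono finite_PiE finite_imageI order_trans)
  also have "\<dots> = card (carrier K) ^ dim" using b d by (simp add: card_PiE)
  finally show ?thesis .
qed

lemma bij_betw_vec_carrier_vec: "bij_betw (vec t) ({0..<t} \<rightarrow>\<^sub>E UNIV) (carrier_vec t)"
proof (rule bij_betwI')
  fix f g :: "nat \<Rightarrow> 'a" assume "f \<in> {0..<t} \<rightarrow>\<^sub>E UNIV" "g \<in> {0..<t} \<rightarrow>\<^sub>E UNIV"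
  then show "(vec t f = vec t g) = (f = g)"
    by (metis (no_types, lifting) PiE_ext atLeastLessThan_iff index_vec)
next
  fix v :: "'a vec" assume "v \<in> carrier_vec t"
  then have "v = vec t (restrict (\<lambda>i. v $ i) {0..<t})" by (intro eq_vecI) auto
  then show "\<exists>f\<in>{0..<t} \<rightarrow>\<^sub>E UNIV. v = vec t f" by fastforce
qed simp

lemma card_carrier_vec: "card (carrier_vec t :: 'a::finite vec set) = card (UNIV :: 'a set) ^ t"
  using bij_betw_same_card[OF bij_betw_vec_carrier_vec[where 'a='a and t=t]] by (simp add: card_PiE)

lemma finite_carrier_vec: "finite (carrier_vec t :: 'a::finite vec set)"
  using bij_betw_finite[OF bij_betw_vec_carrier_vec[where 'a='a and t=t]] by (simp add: finite_PiE)

lemma (in vec_space) span_closed: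
  assumes "W \<subseteq> carrier_vec n"
  shows "0\<^sub>v n \<in> span W" "a \<in> span W \<Longrightarrow> b \<in> span W \<Longrightarrow> a + b \<in> span W"
    "x \<in> span W \<Longrightarrow> c \<cdot>\<^sub>v x \<in> span W" "span W \<subseteq> carrier_vec n" "W \<subseteq> span W"
proof -
  interpret S: LinearCombinations.submodule class_ring "span W" V
    using span_is_submodule assms by simp
  show "0\<^sub>v n \<in> span W" using S.zero_closed by (simp add: module_vec_simps)
  show "a \<in> span W \<Longrightarrow> b \<in> span W \<Longrightarrow> a + b \<in> span W"
    using S.m_closed by (simp add: module_vec_simps)
  show "x \<in> span W \<Longrightarrow> c \<cdot>\<^sub>v x \<in> span W"
    using S.smult_closed by (simp add: module_vec_simps class_ring_simps)
  show "span W \<subseteq> carrier_vec n" using S.subset by (simp add: module_vec_simps)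
  show "W \<subseteq> span W" using in_own_span assms by simp
qed

lemma card_span_le:
  fixes W :: "'a::{field,finite} vec set"
  assumes "W \<subseteq> carrier_vec t"
  shows "card (LinearCombinations.module.span class_ring (module_vec TYPE('a) t) W)
    \<le> card (UNIV :: 'a set) ^ span_dim t W"
proof -
  interpret vec_space "TYPE('a)" t .
  have "finite W" using assms finite_carrier_vec finite_subset by blast
  then have "vectorspace class_ring (vs (span W))" "vectorspace.fin_dim class_ring (vs (span W))"
    using assms span_is_subspace subspace_is_vs fin_dim_span by auto
  then show ?thesis
    unfolding span_dim_def using vectorspace.card_carrier_le by (fastforce simp: class_ring_simps)
qed

lemma card_orthogonal_hyperplane_le:
  fixes x :: "'a::{field,finite} vec"
  assumes x: "x \<in> carrier_vec t" "x \<noteq> 0\<^sub>v t"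
  shows "card {f \<in> carrier_vec t. f \<bullet> x = 0} * card (UNIV :: 'a set) \<le> card (UNIV :: 'a set) ^ t"
proof -
  obtain p where p: "p < t" "x $ p \<noteq> 0" using x by (metis eq_vecI carrier_vecD index_zero_vec)
  define K where "K = {f \<in> carrier_vec t. f \<bullet> x = 0}"
  define h :: "'a vec \<times> 'a \<Rightarrow> 'a vec" where "h = (\<lambda>(f, c). f + c \<cdot>\<^sub>v unit_vec t p)"
  have hx: "h (f, c) \<bullet> x = c * x $ p" if "f \<in> K" for f c
    using that x p add_scalar_prod_distrib[of f t "c \<cdot>\<^sub>v unit_vec t p" x] unfolding h_def K_def by auto
  have "inj_on h (K \<times> UNIV)"
  proof (rule inj_onI, clarify)
    fix f c g d assume fg: "f \<in> K" "g \<in> K" and e: "h (f, c) = h (g, d)"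
    have "c * x $ p = d * x $ p" using hx fg e by metis
    then have cd: "c = d" using p by simp
    have "f $ i = g $ i" if "i < t" for i
      using arg_cong[OF e, of "\<lambda>v. v $ i"] that fg cd unfolding h_def K_def by auto
    then show "f = g \<and> c = d" using fg cd unfolding K_def by (auto intro: eq_vecI)
  qed
  moreover have "h ` (K \<times> UNIV) \<subseteq> carrier_vec t" unfolding h_def K_def by auto
  ultimately have "card (K \<times> (UNIV::'a set)) \<le> card (carrier_vec t :: 'a vec set)"
    using card_inj_on_le finite_carrier_vec by blast
  then show ?thesis unfolding K_def card_carrier_vec by (simp add: card_cartesian_product)
qed

text \<open>Union bound: a fixed nonzero vector is killed by only a \<open>q\<^sup>-\<^sup>r\<close> fraction of the
  \<open>r \<times> t\<close> matrices.\<close>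

lemma exists_mat_mult_vec_nonzero:
  fixes X :: "'a::{field,finite} vec set"
  assumes X: "X \<subseteq> carrier_vec t - {0\<^sub>v t}" and card_X: "card X < card (UNIV :: 'a set) ^ r"
  shows "\<exists>A \<in> carrier_mat r t. \<forall>x\<in>X. A *\<^sub>v x \<noteq> 0\<^sub>v r"
proof -
  define q where "q = card (UNIV :: 'a set)"
  define K where "K x = {f \<in> carrier_vec t. f \<bullet> x = (0::'a)}" for x
  define Bad where "Bad = (\<Union>x\<in>X. {0..<r} \<rightarrow>\<^sub>E K x)"
  define All where "All = {0..<r} \<rightarrow>\<^sub>E (carrier_vec t :: 'a vec set)"
  have fin_X: "finite X" using X finite_carrier_vec finite_subset by blast
  have card_Bad_x: "card ({0..<r} \<rightarrow>\<^sub>E K x) * q ^ r \<le> q ^ (t * r)" if "x \<in> X" for x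
  proof -
    have "(card (K x) * q) ^ r \<le> (q ^ t) ^ r"
      using card_orthogonal_hyperplane_le X that unfolding K_def q_def by (intro power_mono) auto
    then show ?thesis by (simp add: card_PiE power_mult_distrib power_mult)
  qed
  have "card Bad \<le> (\<Sum>x\<in>X. card ({0..<r} \<rightarrow>\<^sub>E K x))"
    unfolding Bad_def by (rule card_UN_le[OF fin_X])
  then have "card Bad * q ^ r \<le> (\<Sum>x\<in>X. card ({0..<r} \<rightarrow>\<^sub>E K x)) * q ^ r"
    by (rule mult_right_mono) simp
  also have "\<dots> \<le> card X * q ^ (t * r)"
    using sum_mono[OF card_Bad_x] by (simp add: sum_distrib_right)
  also have "\<dots> < q ^ (t * r) * q ^ r"
    using card_X card_UNIV_field_ge_2[where 'a='a] unfolding q_def by simp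
  finally have "card Bad < card All"
    by (simp add: All_def card_PiE card_carrier_vec q_def power_mult)
  moreover have "finite Bad"
    unfolding Bad_def K_def using fin_X by (auto intro!: finite_PiE intro: rev_finite_subset[OF finite_carrier_vec])
  ultimately have "\<not> All \<subseteq> Bad" using card_mono leD by blast
  then obtain F where "F \<in> All" "F \<notin> Bad" by blast
  then have F: "\<And>a. a < r \<Longrightarrow> F a \<in> carrier_vec t" "F \<notin> Bad" unfolding All_def by auto
  define A where "A = mat_of_rows t (map F [0..<r])"
  have "A *\<^sub>v x \<noteq> 0\<^sub>v r" if "x \<in> X" for x
  proof -
    have "F \<notin> {0..<r} \<rightarrow>\<^sub>E K x" using F(2) that unfolding Bad_def by blast
    then obtain a where a: "a < r" "F a \<bullet> x \<noteq> 0"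
      using F(1) \<open>F \<in> All\<close> unfolding All_def K_def by (auto simp: PiE_iff)
    then have "(A *\<^sub>v x) $ a \<noteq> 0" using F unfolding A_def by auto
    then show ?thesis using a(1) by auto
  qed
  moreover have "A \<in> carrier_mat r t"
    using mat_of_rows_carrier(1)[of t "map F [0..<r]"] unfolding A_def by simp
  ultimately show ?thesis by blast
qed

subsection \<open>Linear combinations of lists of vectors\<close>

text \<open>Unlike the library's \<open>span\<close>, this list version comes with a structural induction, which
  both the construction of dual vectors and the pull-back along a matrix use.\<close>

inductive in_list_span :: "nat \<Rightarrow> 'a::field vec list \<Rightarrow> 'a vec \<Rightarrow> bool" for r where
  in_list_span_Nil: "in_list_span r [] (0\<^sub>v r)"
| in_list_span_Cons: "in_list_span r xs z \<Longrightarrow> in_list_span r (x # xs) (a \<cdot>\<^sub>v x + z)"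

lemma in_list_span_carrier:
  "in_list_span r xs z \<Longrightarrow> set xs \<subseteq> carrier_vec r \<Longrightarrow> z \<in> carrier_vec r"
  by (induction rule: in_list_span.induct) auto

lemma in_list_span_ConsI:
  assumes "in_list_span r xs (z - a \<cdot>\<^sub>v x)" "x \<in> carrier_vec r" "z \<in> carrier_vec r"
  shows "in_list_span r (x # xs) z"
proof -
  have "z = a \<cdot>\<^sub>v x + (z - a \<cdot>\<^sub>v x)" using assms(2,3) by (intro eq_vecI) auto
  then show ?thesis using in_list_span_Cons[OF assms(1)] by metis
qed

lemma in_list_span_orthogonal:
  "in_list_span r xs z \<Longrightarrow> set xs \<subseteq> carrier_vec r \<Longrightarrow> y \<in> carrier_vec r
   \<Longrightarrow> \<forall>w\<in>set xs. y \<bullet> w = 0 \<Longrightarrow> y \<bullet> z = 0"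
proof (induction rule: in_list_span.induct)
  case (in_list_span_Cons xs z x a)
  then have "z \<in> carrier_vec r" "x \<in> carrier_vec r" using in_list_span_carrier by auto
  then show ?case using in_list_span_Cons scalar_prod_add_distrib[of y r "a \<cdot>\<^sub>v x" z] by auto
qed simp

lemma (in vec_space) in_list_span_in_span:
  "in_list_span n ws w \<Longrightarrow> set ws \<subseteq> W \<Longrightarrow> W \<subseteq> carrier_vec n \<Longrightarrow> w \<in> span W"
proof (induction rule: in_list_span.induct)
  case (in_list_span_Cons xs z x a)
  then show ?case using span_closed[OF in_list_span_Cons.prems(2)] by auto
qed (simp add: span_closed)

lemma in_list_span_mult_mat_vec:
  assumes A: "A \<in> carrier_mat r t"
  shows "in_list_span r (map (\<lambda>w. A *\<^sub>v w) ws) z \<Longrightarrow> set ws \<subseteq> carrier_vec t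
    \<Longrightarrow> \<exists>w. in_list_span t ws w \<and> A *\<^sub>v w = z"
proof (induction ws arbitrary: z)
  case Nil
  then have "z = 0\<^sub>v r" by (auto elim: in_list_span.cases)
  moreover have "A *\<^sub>v 0\<^sub>v t = 0\<^sub>v r" using A by (intro eq_vecI) auto
  ultimately show ?case using in_list_span_Nil by blast
next
  case (Cons w ws)
  from Cons.prems(1) obtain a z' where z: "z = a \<cdot>\<^sub>v (A *\<^sub>v w) + z'"
    and z': "in_list_span r (map (\<lambda>w. A *\<^sub>v w) ws) z'"
    by (auto elim: in_list_span.cases)
  obtain w' where w': "in_list_span t ws w'" "A *\<^sub>v w' = z'"
    using Cons.IH[OF z'] Cons.prems(2) by auto
  have "w \<in> carrier_vec t" "w' \<in> carrier_vec t"
    using Cons.prems(2) in_list_span_carrier[OF w'(1)] by auto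
  then have "A *\<^sub>v (a \<cdot>\<^sub>v w + w') = z"
    using A w'(2) z by (simp add: mult_add_distrib_mat_vec mult_mat_vec)
  then show ?case using in_list_span_Cons[OF w'(1)] by blast
qed

lemma dual_vector_Cons:
  fixes w x y\<^sub>w y\<^sub>z :: "'a::field vec"
  assumes carrier: "w \<in> carrier_vec r" "x \<in> carrier_vec r" "y\<^sub>w \<in> carrier_vec r" "y\<^sub>z \<in> carrier_vec r"
    and y\<^sub>w: "\<forall>v\<in>set ws. y\<^sub>w \<bullet> v = 0" "y\<^sub>w \<bullet> w = 1"
    and y\<^sub>z: "\<forall>v\<in>set ws. y\<^sub>z \<bullet> v = 0" "y\<^sub>z \<bullet> (x - (y\<^sub>w \<bullet> x) \<cdot>\<^sub>v w) = 1"
    and ws: "set ws \<subseteq> carrier_vec r"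
  shows "\<forall>v\<in>set (w # ws). (y\<^sub>z - (y\<^sub>z \<bullet> w) \<cdot>\<^sub>v y\<^sub>w) \<bullet> v = 0" "(y\<^sub>z - (y\<^sub>z \<bullet> w) \<cdot>\<^sub>v y\<^sub>w) \<bullet> x = 1"
proof -
  have y: "(y\<^sub>z - (y\<^sub>z \<bullet> w) \<cdot>\<^sub>v y\<^sub>w) \<bullet> v = y\<^sub>z \<bullet> v - (y\<^sub>z \<bullet> w) * (y\<^sub>w \<bullet> v)" if "v \<in> carrier_vec r" for v
    using minus_scalar_prod_distrib[of y\<^sub>z r "(y\<^sub>z \<bullet> w) \<cdot>\<^sub>v y\<^sub>w" v] that carrier by auto
  have "y\<^sub>z \<bullet> (x - (y\<^sub>w \<bullet> x) \<cdot>\<^sub>v w) = y\<^sub>z \<bullet> x - (y\<^sub>w \<bullet> x) * (y\<^sub>z \<bullet> w)"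
    using scalar_prod_minus_distrib[of y\<^sub>z r x "(y\<^sub>w \<bullet> x) \<cdot>\<^sub>v w"] carrier by auto
  then have "(y\<^sub>z - (y\<^sub>z \<bullet> w) \<cdot>\<^sub>v y\<^sub>w) \<bullet> x = y\<^sub>z \<bullet> (x - (y\<^sub>w \<bullet> x) \<cdot>\<^sub>v w)"
    unfolding y[OF carrier(2)] by (simp add: mult.commute)
  then show "(y\<^sub>z - (y\<^sub>z \<bullet> w) \<cdot>\<^sub>v y\<^sub>w) \<bullet> x = 1" using y\<^sub>z(2) by simp
  show "\<forall>v\<in>set (w # ws). (y\<^sub>z - (y\<^sub>z \<bullet> w) \<cdot>\<^sub>v y\<^sub>w) \<bullet> v = 0" using y y\<^sub>w y\<^sub>z(1) ws carrier by auto
qed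

lemma exists_dual_vector:
  fixes xs :: "'a::field vec list"
  shows "set xs \<subseteq> carrier_vec r \<Longrightarrow> x \<in> carrier_vec r \<Longrightarrow> \<not> in_list_span r xs x
    \<Longrightarrow> \<exists>y\<in>carrier_vec r. (\<forall>w\<in>set xs. y \<bullet> w = 0) \<and> y \<bullet> x = 1"
proof (induction xs arbitrary: x)
  case Nil
  then obtain p where p: "p < r" "x $ p \<noteq> 0"
    using in_list_span_Nil by (metis eq_vecI carrier_vecD index_zero_vec)
  then have "((1 / x $ p) \<cdot>\<^sub>v unit_vec r p) \<bullet> x = 1" using Nil(2) by simp
  then show ?case by (intro bexI[of _ "(1 / x $ p) \<cdot>\<^sub>v unit_vec r p"]) simp_all
next
  case (Cons w ws)
  have w: "w \<in> carrier_vec r" and ws: "set ws \<subseteq> carrier_vec r" using Cons.prems(1) by auto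
  have x: "x \<in> carrier_vec r" and x_notin: "\<not> in_list_span r (w # ws) x" using Cons.prems(2,3) .
  show ?case
  proof (cases "in_list_span r ws w")
    case True
    have "x - 0 \<cdot>\<^sub>v w = x" using w x by (intro eq_vecI) auto
    then have "\<not> in_list_span r ws x" using in_list_span_ConsI[of r ws x 0 w] w x x_notin by auto
    then obtain y where "y \<in> carrier_vec r" "\<forall>v\<in>set ws. y \<bullet> v = 0" "y \<bullet> x = 1"
      using Cons.IH[OF ws x] by blast
    then show ?thesis using in_list_span_orthogonal[OF True ws] by auto
  next
    case False
    obtain y\<^sub>w where y\<^sub>w: "y\<^sub>w \<in> carrier_vec r" "\<forall>v\<in>set ws. y\<^sub>w \<bullet> v = 0" "y\<^sub>w \<bullet> w = 1"
      using Cons.IH[OF ws w False] by blast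
    have z: "x - (y\<^sub>w \<bullet> x) \<cdot>\<^sub>v w \<in> carrier_vec r" using w x by simp
    have "\<not> in_list_span r ws (x - (y\<^sub>w \<bullet> x) \<cdot>\<^sub>v w)"
      using in_list_span_ConsI[of r ws x "y\<^sub>w \<bullet> x" w] w x x_notin by blast
    then obtain y\<^sub>z where y\<^sub>z: "y\<^sub>z \<in> carrier_vec r" "\<forall>v\<in>set ws. y\<^sub>z \<bullet> v = 0"
      "y\<^sub>z \<bullet> (x - (y\<^sub>w \<bullet> x) \<cdot>\<^sub>v w) = 1"
      using Cons.IH[OF ws z] by blast
    have "y\<^sub>z - (y\<^sub>z \<bullet> w) \<cdot>\<^sub>v y\<^sub>w \<in> carrier_vec r" using y\<^sub>w(1) y\<^sub>z(1) by simp
    then show ?thesis using dual_vector_Cons[OF w x y\<^sub>w(1) y\<^sub>z(1) y\<^sub>w(2,3) y\<^sub>z(2,3) ws] by blast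
  qed
qed

lemma rank_mat_sum_products_le:
  fixes f g :: "nat \<Rightarrow> nat \<Rightarrow> 'a::field"
  shows "vec_space.rank n (mat n n (\<lambda>(i,j). \<Sum>a<r. f a i * g a j)) \<le> r"
proof (induction r)
  case 0
  have "mat n n (\<lambda>(i,j). \<Sum>a<0. f a i * g a j) = (0\<^sub>m n n :: 'a mat)" by (intro eq_matI) auto
  then show ?case using vec_space.rank_0I by (metis le_refl)
next
  case (Suc r)
  have "mat n n (\<lambda>(i,j). \<Sum>a<Suc r. f a i * g a j) =
        mat n n (\<lambda>(i,j). \<Sum>a<r. f a i * g a j) + mat n n (\<lambda>(i,j). f r i * g r j)"
    by (intro eq_matI) auto
  moreover have "vec_space.rank n (mat n n (\<lambda>(i,j). f r i * g r j)) \<le> 1"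
    by (rule vec_space.rank_le_1_product_entries[of _ n n]) auto
  moreover have "vec_space.rank n (mat n n (\<lambda>(i,j). \<Sum>a<r. f a i * g a j) + mat n n (\<lambda>(i,j). f r i * g r j))
     \<le> vec_space.rank n (mat n n (\<lambda>(i,j). \<Sum>a<r. f a i * g a j)) + vec_space.rank n (mat n n (\<lambda>(i,j). f r i * g r j))"
    by (rule vec_space.rank_subadditive[of _ n n]) auto
  ultimately show ?case using Suc by simp
qed

lemma minrk_le_rank:
  fixes M :: "'a::field mat"
  shows "represents n E M \<Longrightarrow> minrk TYPE('a) n E \<le> vec_space.rank n M"
  unfolding minrk_def by (intro Least_le) blast

lemma minrk_le_of_not_in_list_span:
  fixes x :: "nat \<Rightarrow> 'a::field vec"
  assumes x: "\<And>j. j < n \<Longrightarrow> x j \<in> carrier_vec r"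
    and not_span: "\<And>j. j < n \<Longrightarrow> \<not> in_list_span r (map x (filter (complement E j) [0..<n])) (x j)"
  shows "minrk TYPE('a) n E \<le> r"
proof -
  have "\<exists>y\<in>carrier_vec r. (\<forall>w\<in>set (map x (filter (complement E j) [0..<n])). y \<bullet> w = 0) \<and> y \<bullet> x j = 1"
    if "j < n" for j
    by (rule exists_dual_vector) (use x not_span that in auto)
  then have "\<forall>j\<in>{..<n}. \<exists>y. (\<forall>i<n. complement E j i \<longrightarrow> y \<bullet> x i = 0) \<and> y \<bullet> x j = 1"
    by fastforce
  from bchoice[OF this] obtain y
    where y: "\<forall>j\<in>{..<n}. (\<forall>i<n. complement E j i \<longrightarrow> y j \<bullet> x i = 0) \<and> y j \<bullet> x j = 1" ..
  define M :: "'a mat" where "M = mat n n (\<lambda>(i,j). \<Sum>a<r. y i $ a * x j $ a)"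
  have M: "M $$ (i,j) = y i \<bullet> x j" if "i < n" "j < n" for i j
    unfolding M_def scalar_prod_def using that x[of j] by (simp add: atLeast0LessThan)
  have "represents n E M"
    unfolding represents_def
  proof (intro conjI allI impI)
    show "M \<in> carrier_mat n n" unfolding M_def by simp
  next
    fix i assume "i < n"
    then show "M $$ (i, i) \<noteq> 0" using M y by simp
  next
    fix i j assume "i < n" "j < n" "i \<noteq> j \<and> \<not> E i j"
    then show "M $$ (i, j) = 0" using M y by (simp add: complement_def)
  qed
  then have "minrk TYPE('a) n E \<le> vec_space.rank n M" by (rule minrk_le_rank)
  also have "\<dots> \<le> r" unfolding M_def by (rule rank_mat_sum_products_le)
  finally show ?thesis .
qed

subsection \<open>Projecting an orthogonal representation\<close>

definition closed_nbhd :: "nat \<Rightarrow> (nat \<Rightarrow> nat \<Rightarrow> bool) \<Rightarrow> nat \<Rightarrow> nat set" where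
  "closed_nbhd n H v = {v'. v' < n \<and> (v' = v \<or> H v v')}"

lemma xi_bar_l_attained:
  assumes "\<And>v. v < n \<Longrightarrow> \<not> H v v"
  obtains t and u :: "nat \<Rightarrow> 'a::field vec"
  where "orth_rep n H t u" "locality n H t u = xi_bar_l TYPE('a) n H"
proof -
  have "orth_rep n H n (\<lambda>v. unit_vec n v :: 'a vec)"
    unfolding orth_rep_def using assms by auto
  then have "\<exists>k t (u :: nat \<Rightarrow> 'a vec). orth_rep n H t u \<and> locality n H t u = k" by blast
  from LeastI_ex[OF this] show ?thesis using that unfolding xi_bar_l_def by blast
qed

lemma card_span_closed_nbhd_le:
  fixes u :: "nat \<Rightarrow> 'a::{field,finite} vec"
  assumes u: "\<And>v. v < n \<Longrightarrow> u v \<in> carrier_vec t" and v: "v < n"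
  shows "card (LinearCombinations.module.span class_ring (module_vec TYPE('a) t) (u ` closed_nbhd n H v))
    \<le> card (UNIV :: 'a set) ^ locality n H t u"
proof -
  have "span_dim t (u ` closed_nbhd n H v) \<le> locality n H t u"
    unfolding locality_def closed_nbhd_def
    by (rule Max_ge) (use v in \<open>auto simp: setcompr_eq_image\<close>)
  then have "card (UNIV :: 'a set) ^ span_dim t (u ` closed_nbhd n H v) \<le> card (UNIV :: 'a set) ^ locality n H t u"
    using card_UNIV_field_ge_2[where 'a='a] by (intro power_increasing) auto
  moreover have "u ` closed_nbhd n H v \<subseteq> carrier_vec t" using u unfolding closed_nbhd_def by auto
  ultimately show ?thesis using card_span_le order_trans by blast
qed

lemma exists_mat_nonzero_on_span_closed_nbhd:
  fixes u :: "nat \<Rightarrow> 'a::{field,finite} vec"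
  assumes u: "\<And>v. v < n \<Longrightarrow> u v \<in> carrier_vec t" and n: "n \<le> card (UNIV :: 'a set) ^ c"
  shows "\<exists>A \<in> carrier_mat (locality n H t u + c) t. \<forall>v<n.
    \<forall>x \<in> LinearCombinations.module.span class_ring (module_vec TYPE('a) t) (u ` closed_nbhd n H v).
      x \<noteq> 0\<^sub>v t \<longrightarrow> A *\<^sub>v x \<noteq> 0\<^sub>v (locality n H t u + c)"
proof -
  interpret vec_space "TYPE('a)" t .
  define q where "q = card (UNIV :: 'a set)"
  define k where "k = locality n H t u"
  define S where "S v = span (u ` closed_nbhd n H v)" for v
  have "u ` closed_nbhd n H v \<subseteq> carrier_vec t" for v using u unfolding closed_nbhd_def by auto
  then have S: "0\<^sub>v t \<in> S v" "S v \<subseteq> carrier_vec t" for v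
    using span_closed unfolding S_def by auto
  have "card (\<Union>v<n. S v - {0\<^sub>v t}) \<le> (\<Sum>v<n. card (S v - {0\<^sub>v t}))"
    by (rule card_UN_le) simp
  also have "\<dots> \<le> (\<Sum>v<n. q ^ k - 1)"
  proof (intro sum_mono)
    fix v assume "v \<in> {..<n}"
    then have "card (S v) \<le> q ^ k"
      using card_span_closed_nbhd_le[OF u] unfolding S_def q_def k_def by simp
    moreover have "finite (S v)" using S(2) finite_carrier_vec finite_subset by blast
    ultimately show "card (S v - {0\<^sub>v t}) \<le> q ^ k - 1" using S(1) by (simp add: card_Diff_singleton)
  qed
  also have "\<dots> \<le> q ^ c * (q ^ k - 1)" using n unfolding q_def by simp
  also have "\<dots> < q ^ c * q ^ k"
    using card_UNIV_field_ge_2[where 'a='a] unfolding q_def by (intro mult_strict_left_mono diff_less) auto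
  finally have "card (\<Union>v<n. S v - {0\<^sub>v t}) < q ^ (k + c)" by (simp add: power_add mult.commute)
  moreover have "(\<Union>v<n. S v - {0\<^sub>v t}) \<subseteq> carrier_vec t - {0\<^sub>v t}" using S by auto
  ultimately obtain A where A: "A \<in> carrier_mat (k + c) t"
    and "\<forall>x\<in>(\<Union>v<n. S v - {0\<^sub>v t}). A *\<^sub>v x \<noteq> 0\<^sub>v (k + c)"
    using exists_mat_mult_vec_nonzero[of "\<Union>v<n. S v - {0\<^sub>v t}" t "k + c"] unfolding q_def by blast
  then have "\<forall>v<n. \<forall>x \<in> S v. x \<noteq> 0\<^sub>v t \<longrightarrow> A *\<^sub>v x \<noteq> 0\<^sub>v (k + c)" by blast
  with A show ?thesis unfolding k_def[symmetric] S_def[symmetric] by (rule bexI[rotated])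
qed

lemma projected_orth_rep_not_in_list_span:
  fixes u :: "nat \<Rightarrow> 'a::field vec"
  assumes u: "orth_rep n H t u" and A: "A \<in> carrier_mat r t" and j: "j < n"
    and nonzero: "\<And>x. x \<in> LinearCombinations.module.span class_ring (module_vec TYPE('a) t)
      (u ` closed_nbhd n H j) \<Longrightarrow> x \<noteq> 0\<^sub>v t \<Longrightarrow> A *\<^sub>v x \<noteq> 0\<^sub>v r"
  shows "\<not> in_list_span r (map (\<lambda>i. A *\<^sub>v u i) (filter (H j) [0..<n])) (A *\<^sub>v u j)"
proof
  interpret vec_space "TYPE('a)" t .
  define ws where "ws = map u (filter (H j) [0..<n])"
  have uc: "\<And>v. v < n \<Longrightarrow> u v \<in> carrier_vec t" using u unfolding orth_rep_def by auto
  have N: "set ws \<subseteq> u ` closed_nbhd n H j" "u ` closed_nbhd n H j \<subseteq> carrier_vec t"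
    using uc unfolding ws_def closed_nbhd_def by auto
  assume "in_list_span r (map (\<lambda>i. A *\<^sub>v u i) (filter (H j) [0..<n])) (A *\<^sub>v u j)"
  moreover have "map (\<lambda>w. A *\<^sub>v w) ws = map (\<lambda>i. A *\<^sub>v u i) (filter (H j) [0..<n])"
    unfolding ws_def by simp
  ultimately have "in_list_span r (map (\<lambda>w. A *\<^sub>v w) ws) (A *\<^sub>v u j)" by simp
  then obtain w where w: "in_list_span t ws w" "A *\<^sub>v w = A *\<^sub>v u j"
    using in_list_span_mult_mat_vec[OF A] N by blast
  have wc: "w \<in> carrier_vec t" using in_list_span_carrier[OF w(1)] N by auto
  have "u j \<bullet> w = 0"
    using in_list_span_orthogonal[OF w(1)] N uc[OF j] u j unfolding orth_rep_def ws_def by auto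
  define d where "d = u j + (-1) \<cdot>\<^sub>v w"
  have "d \<in> span (u ` closed_nbhd n H j)"
    using in_list_span_in_span[OF w(1) N] span_closed[OF N(2)] j
    unfolding d_def closed_nbhd_def by auto
  moreover have "u j \<bullet> d = u j \<bullet> u j"
    using scalar_prod_add_distrib[of "u j" t "u j" "(-1) \<cdot>\<^sub>v w"] wc uc[OF j] \<open>u j \<bullet> w = 0\<close>
    unfolding d_def by simp
  then have "d \<noteq> 0\<^sub>v t" using u uc[OF j] j unfolding orth_rep_def by auto
  moreover have "A *\<^sub>v d = A *\<^sub>v u j + (-1) \<cdot>\<^sub>v (A *\<^sub>v u j)"
    using A wc uc[OF j] w(2) by (simp add: d_def mult_add_distrib_mat_vec mult_mat_vec)
  then have "A *\<^sub>v d = 0\<^sub>v r" using A by (auto intro!: eq_vecI)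
  ultimately show False using nonzero by blast
qed

lemma minrk_le_locality_add:
  fixes u :: "nat \<Rightarrow> 'a::{field,finite} vec"
  assumes u: "orth_rep n (complement E) t u" and n: "n \<le> card (UNIV :: 'a set) ^ c"
  shows "minrk TYPE('a) n E \<le> locality n (complement E) t u + c"
proof -
  define r where "r = locality n (complement E) t u + c"
  have u_carrier: "\<And>v. v < n \<Longrightarrow> u v \<in> carrier_vec t" using u unfolding orth_rep_def by auto
  have "\<exists>A \<in> carrier_mat r t. \<forall>v<n.
    \<forall>x \<in> LinearCombinations.module.span class_ring (module_vec TYPE('a) t) (u ` closed_nbhd n (complement E) v).
      x \<noteq> 0\<^sub>v t \<longrightarrow> A *\<^sub>v x \<noteq> 0\<^sub>v r"
    unfolding r_def by (rule exists_mat_nonzero_on_span_closed_nbhd) (use u_carrier n in auto)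
  then obtain A where A: "A \<in> carrier_mat r t"
    and nonzero: "\<forall>v<n. \<forall>x \<in> LinearCombinations.module.span class_ring (module_vec TYPE('a) t)
      (u ` closed_nbhd n (complement E) v). x \<noteq> 0\<^sub>v t \<longrightarrow> A *\<^sub>v x \<noteq> 0\<^sub>v r" ..
  show ?thesis unfolding r_def[symmetric]
  proof (rule minrk_le_of_not_in_list_span[where x = "\<lambda>i. A *\<^sub>v u i"])
    fix j assume j: "j < n"
    show "A *\<^sub>v u j \<in> carrier_vec r" using A by (simp add: carrier_vecI)
    show "\<not> in_list_span r (map (\<lambda>i. A *\<^sub>v u i) (filter (complement E j) [0..<n])) (A *\<^sub>v u j)"
      using projected_orth_rep_not_in_list_span[OF u A j] nonzero j by blast
  qed
qed

theorem mainTheorem13: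
  fixes E :: "nat \<Rightarrow> nat \<Rightarrow> bool" and n :: nat
  assumes "simple_graph n E"
  shows "int (minrk TYPE('a::{field,finite}) n E)
           \<le> int (xi_bar_l TYPE('a) n (complement E)) + \<lceil>log (real (card (UNIV :: 'a set))) (real n)\<rceil>"
proof -
  define c where "c = nat \<lceil>log (real (card (UNIV :: 'a set))) (real n)\<rceil>"
  obtain t and u :: "nat \<Rightarrow> 'a vec" where u: "orth_rep n (complement E) t u"
    and loc: "locality n (complement E) t u = xi_bar_l TYPE('a) n (complement E)"
    using xi_bar_l_attained[of n "complement E"] unfolding complement_def by blast
  have "n \<le> card (UNIV :: 'a set) ^ c"
    using card_UNIV_field_ge_2[where 'a='a] unfolding c_def by (rule le_pow_nat_ceiling_log)
  then have "minrk TYPE('a) n E \<le> xi_bar_l TYPE('a) n (complement E) + c"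
    using minrk_le_locality_add[OF u] unfolding loc by blast
  moreover have "int c = \<lceil>log (real (card (UNIV :: 'a set))) (real n)\<rceil>"
    using ceiling_log_nonneg[OF card_UNIV_field_ge_2[where 'a='a]] unfolding c_def by simp
  ultimately show ?thesis by linarith
qed

end
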